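(* Consider the system on the projected Kasner state space in the context and a solution with $\Sigma_A\Sigma_C\neq0$ initially. Then its $\alpha$-limit set is contained in the closed arc $\{\Sigma_A=\Sigma_C=0,\ \Sigma_+^2+\Sigma_B^2=1,\ -1\le\Sigma_+\le-\tfrac12,\ 0\le\Sigma_B\le\tfrac{\sqrt3}{2}\}$, and its $\omega$-limit set is contained in the closed arc $\{\Sigma_A=\Sigma_C=0,\ \Sigma_+^2+\Sigma_B^2=1,\ \tfrac12\le\Sigma_+\le1,\ -\tfrac{\sqrt3}{2}\le\Sigma_B\le0\}$.
   Context: The projected Kasner system is the ODE system for $(\Sigma_+,\Sigma_A,\Sigma_B,\Sigma_C)\in\mathbb R^4$ restricted to the invariant sphere $\Sigma_+^2+\Sigma_A^2+\Sigma_B^2+\Sigma_C^2=1$: $\Sigma_+'=3\Sigma_A^2$, $\Sigma_A'=-(3\Sigma_++\sqrt3\Sigma_B)\Sigma_A$, $\Sigma_B'=\sqrt3\Sigma_A^2-2\sqrt3\Sigma_C^2$, $\Sigma_C'=2\sqrt3\Sigma_B\Sigma_C$, where $'$ denotes $d/d\tau$, $\tau\in\mathbb R$. *)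

theory Defs
  imports "HOL-Analysis.Analysis"
begin

type_synonym state = "real \<times> real \<times> real \<times> real"
  (* (Sigma_+, Sigma_A, Sigma_B, Sigma_C) *)

definition kasner_solution ::
  "(real \<Rightarrow> real) \<Rightarrow> (real \<Rightarrow> real) \<Rightarrow> (real \<Rightarrow> real) \<Rightarrow> (real \<Rightarrow> real) \<Rightarrow> bool" where
  "kasner_solution Sp SA SB SC \<longleftrightarrow>
     (\<forall>t. (Sp has_real_derivative 3 * (SA t)\<^sup>2) (at t)
        \<and> (SA has_real_derivative - (3 * Sp t + sqrt 3 * SB t) * SA t) (at t)
        \<and> (SB has_real_derivative sqrt 3 * (SA t)\<^sup>2 - 2 * sqrt 3 * (SC t)\<^sup>2) (at t)
        \<and> (SC has_real_derivative 2 * sqrt 3 * SB t * SC t) (at t))"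

definition omega_limit :: "(real \<Rightarrow> 'a::metric_space) \<Rightarrow> 'a set" where
  "omega_limit x = {p. \<exists>s::nat \<Rightarrow> real. filterlim s at_top sequentially \<and> (\<lambda>n. x (s n)) \<longlonglongrightarrow> p}"

definition alpha_limit :: "(real \<Rightarrow> 'a::metric_space) \<Rightarrow> 'a set" where
  "alpha_limit x = {p. \<exists>s::nat \<Rightarrow> real. filterlim s at_bot sequentially \<and> (\<lambda>n. x (s n)) \<longlonglongrightarrow> p}"

definition alpha_arc :: "state set" where
  "alpha_arc = {(sp, sa, sb, sc). sa = 0 \<and> sc = 0 \<and> sp\<^sup>2 + sb\<^sup>2 = 1
      \<and> -1 \<le> sp \<and> sp \<le> -1/2 \<and> 0 \<le> sb \<and> sb \<le> sqrt 3 / 2}"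

definition omega_arc :: "state set" where
  "omega_arc = {(sp, sa, sb, sc). sa = 0 \<and> sc = 0 \<and> sp\<^sup>2 + sb\<^sup>2 = 1
      \<and> 1/2 \<le> sp \<and> sp \<le> 1 \<and> - (sqrt 3 / 2) \<le> sb \<and> sb \<le> 0}"

end

theory Submission
  imports Defs
begin

text \<open>
  Along a solution on the unit sphere, \<open>\<Sigma>\<^sub>+\<close> and \<open>\<Sigma>\<^sub>+ - \<surd>3 \<Sigma>\<^sub>B\<close> are
  nondecreasing (their derivatives are \<open>3\<Sigma>\<^sub>A\<^sup>2\<close> and \<open>6\<Sigma>\<^sub>C\<^sup>2\<close>) and bounded, so
  \<open>\<Sigma>\<^sub>+ \<rightarrow> a\<close> and \<open>\<Sigma>\<^sub>B \<rightarrow> c\<close> as \<open>t \<rightarrow> \<infinity>\<close>.  Thus \<open>\<Sigma>\<^sub>A\<^sup>2\<close> and \<open>\<Sigma>\<^sub>C\<^sup>2\<close> have convergent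
  primitives and bounded derivatives, and Barbalat's lemma gives \<open>\<Sigma>\<^sub>A, \<Sigma>\<^sub>C \<rightarrow> 0\<close>; hence the
  orbit converges to \<open>(a, 0, c, 0)\<close> with \<open>a\<^sup>2 + c\<^sup>2 = 1\<close>.  Since \<open>\<Sigma>\<^sub>A\<close> and \<open>\<Sigma>\<^sub>C\<close>
  solve scalar linear equations \<open>u' = g u\<close> and are initially nonzero, they never vanish,
  and their decay forces the limiting rates \<open>2\<surd>3 c\<close> and \<open>-(3a + \<surd>3 c)\<close> to be
  nonpositive; this places \<open>(a, c)\<close> on the \<open>\<omega>\<close>-arc.  The \<open>\<alpha>\<close>-limit statement follows
  from the symmetry \<open>t \<mapsto> -t\<close>, \<open>(\<Sigma>\<^sub>+, \<Sigma>\<^sub>A, \<Sigma>\<^sub>B, \<Sigma>\<^sub>C) \<mapsto> (-\<Sigma>\<^sub>+, \<Sigma>\<^sub>A, -\<Sigma>\<^sub>B, \<Sigma>\<^sub>C)\<close>,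
  which exchanges the two arcs.
\<close>

lemma bounded_mono_tendsto:
  fixes f :: "real \<Rightarrow> real"
  assumes mono: "mono f" and bound: "\<And>t. f t \<le> B"
  shows "\<exists>a. (f \<longlongrightarrow> a) at_top"
proof
  have bdd: "bdd_above (range f)" using bound by (auto intro!: bdd_aboveI[where M=B])
  show "(f \<longlongrightarrow> Sup (range f)) at_top"
  proof (rule increasing_tendsto)
    show "\<forall>\<^sub>F t in at_top. f t \<le> Sup (range f)"
      using bdd by (auto intro!: always_eventually cSUP_upper)
  next
    fix x assume "x < Sup (range f)"
    then obtain s where "x < f s" using bdd by (meson less_cSUP_iff UNIV_I UNIV_not_empty)
    then show "\<forall>\<^sub>F t in at_top. x < f t"
      unfolding eventually_at_top_linorder using mono by (meson monoD order_less_le_trans)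
  qed
qed

lemma mono_if_nonneg_derivative:
  fixes f f' :: "real \<Rightarrow> real"
  assumes "\<And>t. (f has_real_derivative f' t) (at t)" and "\<And>t. 0 \<le> f' t"
  shows "mono f"
  by (rule monoI, rule DERIV_nonneg_imp_nondecreasing) (use assms in blast)+

lemma bounded_derivative_lipschitz:
  fixes u u' :: "real \<Rightarrow> real"
  assumes du: "\<And>t. (u has_real_derivative u' t) (at t)" and bound: "\<And>t. \<bar>u' t\<bar> \<le> M"
    and "s \<le> t"
  shows "\<bar>u t - u s\<bar> \<le> M * (t - s)"
proof (cases "s = t")
  case False
  with \<open>s \<le> t\<close> have "s < t" by simp
  from MVT2[OF this, of u u'] du obtain z where "u t - u s = (t - s) * u' z" by blast
  hence "\<bar>u t - u s\<bar> = (t - s) * \<bar>u' z\<bar>" using \<open>s < t\<close> by (simp add: abs_mult)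
  also have "\<dots> \<le> (t - s) * M" using bound[of z] \<open>s < t\<close> by (intro mult_left_mono) auto
  finally show ?thesis by (simp add: mult.commute)
qed simp

lemma barbalat:
  fixes F u u' :: "real \<Rightarrow> real"
  assumes dF: "\<And>t. (F has_real_derivative u t) (at t)"
    and du: "\<And>t. (u has_real_derivative u' t) (at t)"
    and bound: "\<And>t. \<bar>u' t\<bar> \<le> M"
    and nonneg: "\<And>t. 0 \<le> u t"
    and lim: "(F \<longlongrightarrow> l) at_top"
  shows "(u \<longlongrightarrow> 0) at_top"
proof (rule order_tendstoI)
  fix e :: real assume "e < 0"
  then show "\<forall>\<^sub>F t in at_top. e < u t"
    using nonneg by (intro always_eventually allI) (meson order_less_le_trans)
next
  fix e :: real assume e: "0 < e"
  have M: "0 \<le> M" using bound[of 0] by linarith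
  define d where "d = e / (2 * (M + 1))"
  have d: "0 < d" using e M by (simp add: d_def)
  have Md: "M * d < e / 2"
  proof -
    have "M * d = e * (M / (2 * (M + 1)))" by (simp add: d_def)
    also have "\<dots> < e * (1 / 2)" using e M by (intro mult_strict_left_mono) (auto simp: field_simps)
    finally show ?thesis by simp
  qed
  have "\<forall>\<^sub>F t in at_top. dist (F t) l < e * d / 4" using lim e d by (intro tendstoD) auto
  then obtain T where T: "\<And>t. T \<le> t \<Longrightarrow> \<bar>F t - l\<bar> < e * d / 4"
    unfolding eventually_at_top_linorder dist_real_def by blast
  show "\<forall>\<^sub>F t in at_top. u t < e"
    unfolding eventually_at_top_linorder
  proof (intro exI allI impI)
    fix t assume "T \<le> t"
    show "u t < e"
    proof (rule ccontr)
      assume "\<not> u t < e"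
      \<comment> \<open>then \<open>u\<close> stays above \<open>e/2\<close> on \<open>[t, t + d]\<close>, so \<open>F\<close> grows by at least \<open>d e / 2\<close> there\<close>
      have stays_large: "e / 2 \<le> u s" if "t \<le> s" "s \<le> t + d" for s
        using bounded_derivative_lipschitz[OF du bound \<open>t \<le> s\<close>] mult_left_mono[of "s - t" d M] M
          that Md \<open>\<not> u t < e\<close> by (auto simp: mult.commute)
      from MVT2[of t "t + d" F u] dF d obtain z where z: "t < z" "z < t + d"
        "F (t + d) - F t = d * u z" by auto
      have "d * (e / 2) \<le> F (t + d) - F t"
        using stays_large[of z] z d by (auto intro: mult_left_mono)
      moreover have "\<bar>F (t + d) - l\<bar> < e * d / 4" "\<bar>F t - l\<bar> < e * d / 4"
        using T \<open>T \<le> t\<close> d by auto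
      moreover have "d * (e / 2) = 2 * (e * d / 4)" by simp
      ultimately show False by linarith
    qed
  qed
qed

lemma linear_ode_square:
  fixes u g :: "real \<Rightarrow> real"
  assumes du: "\<And>t. (u has_real_derivative g t * u t) (at t)"
  shows "((\<lambda>t. (u t)\<^sup>2) has_real_derivative 2 * g t * (u t)\<^sup>2) (at t)"
  by (rule derivative_eq_intros du refl)+ (simp add: power2_eq_square)

text \<open>If moreover \<open>g \<ge> -K\<close>, then \<open>u\<^sup>2 exp (2 K t)\<close> is nondecreasing, so a solution that is
  nonzero at some time stays nonzero at all later times.\<close>
lemma linear_ode_nonvanishing:
  fixes u g :: "real \<Rightarrow> real"
  assumes du: "\<And>t. (u has_real_derivative g t * u t) (at t)"
    and lower: "\<And>t. - K \<le> g t" and "u s \<noteq> 0" and "s \<le> t"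
  shows "u t \<noteq> 0"
proof -
  define h where "h t = (u t)\<^sup>2 * exp (2 * K * t)" for t
  have "h s \<le> h t"
  proof (rule DERIV_nonneg_imp_nondecreasing[OF \<open>s \<le> t\<close>])
    fix x
    have "(h has_real_derivative 2 * (u x)\<^sup>2 * exp (2 * K * x) * (g x + K)) (at x)"
      unfolding h_def[abs_def]
      by (rule derivative_eq_intros linear_ode_square[OF du] refl)+ (simp add: algebra_simps)
    moreover have "0 \<le> 2 * (u x)\<^sup>2 * exp (2 * K * x) * (g x + K)"
      using lower[of x] by simp
    ultimately show "\<exists>y. (h has_real_derivative y) (at x) \<and> 0 \<le> y" by blast
  qed
  moreover have "0 < h s" using \<open>u s \<noteq> 0\<close> by (simp add: h_def)
  ultimately show "u t \<noteq> 0" by (auto simp: h_def)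
qed

text \<open>A nontrivial solution of \<open>u' = g u\<close> that decays to zero cannot have a positive
  asymptotic growth rate \<open>lim g\<close>: eventually \<open>u\<^sup>2\<close> would be nondecreasing.\<close>
lemma linear_ode_decay_rate:
  fixes u g :: "real \<Rightarrow> real"
  assumes du: "\<And>t. (u has_real_derivative g t * u t) (at t)"
    and lower: "\<And>t. - K \<le> g t" and u0: "u 0 \<noteq> 0"
    and u_lim: "(u \<longlongrightarrow> 0) at_top" and g_lim: "(g \<longlongrightarrow> L) at_top"
  shows "L \<le> 0"
proof (rule ccontr)
  assume "\<not> L \<le> 0"
  hence "\<forall>\<^sub>F t in at_top. 0 < g t \<and> 0 \<le> t"
    using order_tendstoD(1)[OF g_lim] eventually_ge_at_top by (auto intro: eventually_conj)
  then obtain T where T: "0 \<le> T" and g_pos: "\<And>t. T \<le> t \<Longrightarrow> 0 < g t"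
    unfolding eventually_at_top_linorder by auto
  have uT: "0 < (u T)\<^sup>2" using linear_ode_nonvanishing[OF du lower u0 T] by simp
  have u2_lim: "((\<lambda>t. (u t)\<^sup>2) \<longlongrightarrow> 0) at_top" using tendsto_power[OF u_lim, of 2] by simp
  have "\<forall>\<^sub>F t in at_top. (u t)\<^sup>2 < (u T)\<^sup>2 \<and> T \<le> t"
    using order_tendstoD(2)[OF u2_lim uT] eventually_ge_at_top[of T] by (rule eventually_conj)
  then obtain t where "(u t)\<^sup>2 < (u T)\<^sup>2" and "T \<le> t"
    unfolding eventually_at_top_linorder by auto
  moreover have "(u T)\<^sup>2 \<le> (u t)\<^sup>2"
  proof (rule DERIV_nonneg_imp_nondecreasing[OF \<open>T \<le> t\<close>])
    fix x assume "T \<le> x"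
    then show "\<exists>y. ((\<lambda>t. (u t)\<^sup>2) has_real_derivative y) (at x) \<and> 0 \<le> y"
      using linear_ode_square[OF du, of x] g_pos[of x] by (auto intro!: exI[of _ "2 * g x * (u x)\<^sup>2"])
  qed
  ultimately show False by simp
qed

lemma linear_ode_tendsto_zero:
  fixes u g F :: "real \<Rightarrow> real"
  assumes du: "\<And>t. (u has_real_derivative g t * u t) (at t)"
    and bound_g: "\<And>t. \<bar>g t\<bar> \<le> K" and bound_u: "\<And>t. \<bar>u t\<bar> \<le> R"
    and dF: "\<And>t. (F has_real_derivative (u t)\<^sup>2) (at t)" and F_lim: "(F \<longlongrightarrow> l) at_top"
  shows "(u \<longlongrightarrow> 0) at_top"
proof -
  have "((\<lambda>t. (u t)\<^sup>2) \<longlongrightarrow> 0) at_top"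
  proof (rule barbalat[OF dF linear_ode_square[OF du] _ _ F_lim])
    fix t
    have "(u t)\<^sup>2 \<le> R\<^sup>2" using power_mono[OF bound_u[of t], of 2] by simp
    then show "\<bar>2 * g t * (u t)\<^sup>2\<bar> \<le> 2 * K * R\<^sup>2"
      using bound_g[of t] by (auto simp: abs_mult intro!: mult_mono)
  qed simp
  then have "((\<lambda>t. sqrt ((u t)\<^sup>2)) \<longlongrightarrow> sqrt 0) at_top" by (intro tendsto_intros)
  then show ?thesis by (simp add: tendsto_rabs_zero_iff)
qed

lemma omega_limit_tendsto:
  fixes x :: "real \<Rightarrow> 'a::metric_space"
  assumes "(x \<longlongrightarrow> p) at_top"
  shows "omega_limit x \<subseteq> {p}"
  using assms unfolding omega_limit_def by (auto intro: LIMSEQ_unique filterlim_compose)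

lemma alpha_limit_tendsto:
  fixes x :: "real \<Rightarrow> 'a::metric_space"
  assumes "(x \<longlongrightarrow> p) at_bot"
  shows "alpha_limit x \<subseteq> {p}"
  using assms unfolding alpha_limit_def by (auto intro: LIMSEQ_unique filterlim_compose)

lemma omega_arc_memberI:
  fixes a c :: real
  assumes circle: "a\<^sup>2 + c\<^sup>2 = 1" and "c \<le> 0" and sector: "0 \<le> 3 * a + sqrt 3 * c"
  shows "(a, 0, c, 0) \<in> omega_arc"
proof -
  have "3 * a + sqrt 3 * c = sqrt 3 * (sqrt 3 * a + c)" by (simp add: algebra_simps)
  with sector have "- c \<le> sqrt 3 * a" by (simp add: zero_le_mult_iff)
  with \<open>c \<le> 0\<close> have "0 \<le> sqrt 3 * a" and "c\<^sup>2 \<le> 3 * a\<^sup>2"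
    using power_mono[of "- c" "sqrt 3 * a" 2] by (auto simp: power_mult_distrib)
  then have "0 \<le> a" by (simp add: zero_le_mult_iff)
  have "(1 / 2)\<^sup>2 = (1 / 4 :: real)" by (simp add: power2_eq_square)
  then have "(1 / 2)\<^sup>2 \<le> a\<^sup>2" and "a\<^sup>2 \<le> 1"
    using circle \<open>c\<^sup>2 \<le> 3 * a\<^sup>2\<close> zero_le_power2[of c] by linarith+
  with \<open>0 \<le> a\<close> have "1 / 2 \<le> a" and "a \<le> 1" by (auto intro: power2_le_imp_le simp: abs_square_le_1)
  have "(- c)\<^sup>2 \<le> (sqrt 3 / 2)\<^sup>2" using circle \<open>(1 / 2)\<^sup>2 \<le> a\<^sup>2\<close> by (simp add: power_divide)
  hence "- c \<le> sqrt 3 / 2" by (rule power2_le_imp_le) simp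
  with \<open>1 / 2 \<le> a\<close> \<open>a \<le> 1\<close> \<open>c \<le> 0\<close> circle show ?thesis by (simp add: omega_arc_def)
qed

text \<open>The reflection \<open>(\<Sigma>\<^sub>+, \<Sigma>\<^sub>A, \<Sigma>\<^sub>B, \<Sigma>\<^sub>C) \<mapsto> (-\<Sigma>\<^sub>+, \<Sigma>\<^sub>A, -\<Sigma>\<^sub>B, \<Sigma>\<^sub>C)\<close>, which
  combined with \<open>t \<mapsto> -t\<close> is a symmetry of the system; it is continuous and maps the
  \<open>\<omega>\<close>-arc onto the \<open>\<alpha>\<close>-arc.\<close>
definition kasner_reflection :: "state \<Rightarrow> state" where
  "kasner_reflection p = (- fst p, fst (snd p), - fst (snd (snd p)), snd (snd (snd p)))"

lemma kasner_reflection_tendsto: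
  "(f \<longlongrightarrow> p) F \<Longrightarrow> ((\<lambda>t. kasner_reflection (f t)) \<longlongrightarrow> kasner_reflection p) F"
  unfolding kasner_reflection_def by (intro tendsto_intros)

lemma kasner_reflection_omega_arc: "p \<in> omega_arc \<Longrightarrow> kasner_reflection p \<in> alpha_arc"
  by (cases p) (auto simp: kasner_reflection_def omega_arc_def alpha_arc_def)

lemma kasner_solution_time_reversal:
  assumes "kasner_solution Sp SA SB SC"
  shows "kasner_solution (\<lambda>t. - Sp (- t)) (\<lambda>t. SA (- t)) (\<lambda>t. - SB (- t)) (\<lambda>t. SC (- t))"
  unfolding kasner_solution_def
proof (intro allI)
  fix t
  have mirror: "((\<lambda>x. f (- x)) has_real_derivative - y) (at t)"
    if "(f has_real_derivative y) (at (- t))" for f and y :: real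
    using that DERIV_mirror by blast
  from assms[unfolded kasner_solution_def, rule_format, of "- t"]
  show "((\<lambda>t. - Sp (- t)) has_real_derivative 3 * (SA (- t))\<^sup>2) (at t) \<and>
    ((\<lambda>t. SA (- t)) has_real_derivative - (3 * - Sp (- t) + sqrt 3 * - SB (- t)) * SA (- t)) (at t) \<and>
    ((\<lambda>t. - SB (- t)) has_real_derivative
       sqrt 3 * (SA (- t))\<^sup>2 - 2 * sqrt 3 * (SC (- t))\<^sup>2) (at t) \<and>
    ((\<lambda>t. SC (- t)) has_real_derivative 2 * sqrt 3 * - SB (- t) * SC (- t)) (at t)"
    by (auto dest!: mirror intro: DERIV_minus[THEN DERIV_cong] simp: algebra_simps)
qed

locale kasner_orbit =
  fixes Sp SA SB SC :: "real \<Rightarrow> real"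
  assumes solution: "kasner_solution Sp SA SB SC"
    and initially_on_sphere: "(Sp 0)\<^sup>2 + (SA 0)\<^sup>2 + (SB 0)\<^sup>2 + (SC 0)\<^sup>2 = 1"
begin

lemma deriv_Sp: "(Sp has_real_derivative 3 * (SA t)\<^sup>2) (at t)"
  and deriv_SA: "(SA has_real_derivative - (3 * Sp t + sqrt 3 * SB t) * SA t) (at t)"
  and deriv_SB: "(SB has_real_derivative sqrt 3 * (SA t)\<^sup>2 - 2 * sqrt 3 * (SC t)\<^sup>2) (at t)"
  and deriv_SC: "(SC has_real_derivative 2 * sqrt 3 * SB t * SC t) (at t)"
  using solution unfolding kasner_solution_def by blast+

lemma on_sphere: "(Sp t)\<^sup>2 + (SA t)\<^sup>2 + (SB t)\<^sup>2 + (SC t)\<^sup>2 = 1"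
proof -
  have "((\<lambda>t. (Sp t)\<^sup>2 + (SA t)\<^sup>2 + (SB t)\<^sup>2 + (SC t)\<^sup>2) has_real_derivative 0) (at t)" for t
    by (rule derivative_eq_intros deriv_Sp deriv_SA deriv_SB deriv_SC refl)+
      (simp add: algebra_simps power2_eq_square)
  from DERIV_isconst_all[OF allI[OF this]] show ?thesis using initially_on_sphere by metis
qed

lemma component_bounds: "\<bar>Sp t\<bar> \<le> 1" "\<bar>SA t\<bar> \<le> 1" "\<bar>SB t\<bar> \<le> 1" "\<bar>SC t\<bar> \<le> 1"
  unfolding abs_square_le_1[symmetric]
  using on_sphere[of t] zero_le_power2[of "Sp t"] zero_le_power2[of "SA t"]
    zero_le_power2[of "SB t"] zero_le_power2[of "SC t"] by linarith+

text \<open>\<open>\<Sigma>\<^sub>A\<close> and \<open>\<Sigma>\<^sub>C\<close> obey scalar linear equations with bounded coefficients.\<close>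
lemma growth_rate_bounds: "\<bar>- (3 * Sp t + sqrt 3 * SB t)\<bar> \<le> 5" "\<bar>2 * sqrt 3 * SB t\<bar> \<le> 4"
proof -
  have "sqrt 3 \<le> (2::real)" by (rule real_le_lsqrt) auto
  hence "\<bar>sqrt 3 * SB t\<bar> \<le> 2" using component_bounds(3)[of t] mult_mono[of "sqrt 3" 2 "\<bar>SB t\<bar>" 1]
    by (simp add: abs_mult)
  moreover have "\<bar>2 * sqrt 3 * SB t\<bar> = 2 * \<bar>sqrt 3 * SB t\<bar>" by (simp add: abs_mult)
  ultimately show "\<bar>- (3 * Sp t + sqrt 3 * SB t)\<bar> \<le> 5" "\<bar>2 * sqrt 3 * SB t\<bar> \<le> 4"
    using component_bounds(1)[of t] abs_triangle_ineq[of "3 * Sp t" "sqrt 3 * SB t"] by auto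
qed

lemma Sp_converges: "\<exists>a. (Sp \<longlongrightarrow> a) at_top"
proof (rule bounded_mono_tendsto[where B=1])
  show "mono Sp" by (rule mono_if_nonneg_derivative[OF deriv_Sp]) simp
qed (use component_bounds(1) in \<open>auto simp: abs_le_iff\<close>)

lemma deriv_shear_combination:
  "((\<lambda>t. Sp t - sqrt 3 * SB t) has_real_derivative 6 * (SC t)\<^sup>2) (at t)"
proof -
  have sqrt3: "sqrt 3 * (sqrt 3 * x) = 3 * x" for x :: real
    by (simp add: mult.assoc[symmetric])
  show ?thesis by (rule derivative_eq_intros deriv_Sp deriv_SB refl)+ (simp add: algebra_simps sqrt3)
qed

lemma shear_combination_converges: "\<exists>b. ((\<lambda>t. Sp t - sqrt 3 * SB t) \<longlongrightarrow> b) at_top"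
proof (rule bounded_mono_tendsto)
  show "mono (\<lambda>t. Sp t - sqrt 3 * SB t)"
    by (rule mono_if_nonneg_derivative[OF deriv_shear_combination]) simp
  show "Sp t - sqrt 3 * SB t \<le> 1 + 2" for t
    using component_bounds(1)[of t] growth_rate_bounds(2)[of t] by (auto simp: abs_le_iff)
qed

lemma SB_converges: "\<exists>c. (SB \<longlongrightarrow> c) at_top"
proof -
  obtain a b where a: "(Sp \<longlongrightarrow> a) at_top" and b: "((\<lambda>t. Sp t - sqrt 3 * SB t) \<longlongrightarrow> b) at_top"
    using Sp_converges shear_combination_converges by blast
  have "((\<lambda>t. (Sp t - (Sp t - sqrt 3 * SB t)) / sqrt 3) \<longlongrightarrow> (a - b) / sqrt 3) at_top"
    by (intro tendsto_intros a b) simp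
  then show ?thesis by auto
qed

text \<open>Since \<open>\<Sigma>\<^sub>A\<^sup>2\<close> and \<open>\<Sigma>\<^sub>C\<^sup>2\<close> have convergent primitives \<open>\<Sigma>\<^sub>+/3\<close> and
  \<open>(\<Sigma>\<^sub>+ - \<surd>3 \<Sigma>\<^sub>B)/6\<close>, both components decay.\<close>
lemma SA_tendsto_zero: "(SA \<longlongrightarrow> 0) at_top"
proof -
  obtain a where a: "(Sp \<longlongrightarrow> a) at_top" using Sp_converges by blast
  show ?thesis
  proof (rule linear_ode_tendsto_zero[OF deriv_SA growth_rate_bounds(1) component_bounds(2)])
    show "((\<lambda>t. Sp t / 3) has_real_derivative (SA t)\<^sup>2) (at t)" for t
      using DERIV_cdivide[OF deriv_Sp[of t], of 3] by simp
    show "((\<lambda>t. Sp t / 3) \<longlongrightarrow> a / 3) at_top" by (intro tendsto_intros a) simp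
  qed
qed

lemma SC_tendsto_zero: "(SC \<longlongrightarrow> 0) at_top"
proof -
  obtain b where b: "((\<lambda>t. Sp t - sqrt 3 * SB t) \<longlongrightarrow> b) at_top"
    using shear_combination_converges by blast
  show ?thesis
  proof (rule linear_ode_tendsto_zero[OF deriv_SC growth_rate_bounds(2) component_bounds(4)])
    show "((\<lambda>t. (Sp t - sqrt 3 * SB t) / 6) has_real_derivative (SC t)\<^sup>2) (at t)" for t
      using DERIV_cdivide[OF deriv_shear_combination[of t], of 6] by simp
    show "((\<lambda>t. (Sp t - sqrt 3 * SB t) / 6) \<longlongrightarrow> b / 6) at_top" by (intro tendsto_intros b) simp
  qed
qed

lemma limit_on_circle:
  assumes a: "(Sp \<longlongrightarrow> a) at_top" and c: "(SB \<longlongrightarrow> c) at_top"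
  shows "a\<^sup>2 + c\<^sup>2 = 1"
proof -
  have "((\<lambda>t. (Sp t)\<^sup>2 + (SA t)\<^sup>2 + (SB t)\<^sup>2 + (SC t)\<^sup>2) \<longlongrightarrow> a\<^sup>2 + 0\<^sup>2 + c\<^sup>2 + 0\<^sup>2) at_top"
    by (intro tendsto_intros a c SA_tendsto_zero SC_tendsto_zero)
  then show ?thesis by (simp add: on_sphere tendsto_const_iff)
qed

text \<open>If \<open>\<Sigma>\<^sub>A \<Sigma>\<^sub>C \<noteq> 0\<close> initially, the decay of \<open>\<Sigma>\<^sub>C\<close> and \<open>\<Sigma>\<^sub>A\<close> forces their asymptotic
  growth rates \<open>2\<surd>3 \<Sigma>\<^sub>B\<close> and \<open>-(3\<Sigma>\<^sub>+ + \<surd>3 \<Sigma>\<^sub>B)\<close> to be nonpositive in the limit.\<close>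
lemma limit_signs:
  assumes init: "SA 0 * SC 0 \<noteq> 0"
    and a: "(Sp \<longlongrightarrow> a) at_top" and c: "(SB \<longlongrightarrow> c) at_top"
  shows "c \<le> 0" and "0 \<le> 3 * a + sqrt 3 * c"
proof -
  have "2 * sqrt 3 * c \<le> 0"
  proof (rule linear_ode_decay_rate[OF deriv_SC _ _ SC_tendsto_zero])
    show "- 4 \<le> 2 * sqrt 3 * SB t" for t using growth_rate_bounds(2)[of t] by linarith
    show "((\<lambda>t. 2 * sqrt 3 * SB t) \<longlongrightarrow> 2 * sqrt 3 * c) at_top" by (intro tendsto_intros c)
  qed (use init in simp)
  then show "c \<le> 0" by (simp add: mult_le_0_iff)
  have "- (3 * a + sqrt 3 * c) \<le> 0"
  proof (rule linear_ode_decay_rate[OF deriv_SA _ _ SA_tendsto_zero])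
    show "- 5 \<le> - (3 * Sp t + sqrt 3 * SB t)" for t using growth_rate_bounds(1)[of t] by linarith
    show "((\<lambda>t. - (3 * Sp t + sqrt 3 * SB t)) \<longlongrightarrow> - (3 * a + sqrt 3 * c)) at_top"
      by (intro tendsto_intros a c)
  qed (use init in simp)
  then show "0 \<le> 3 * a + sqrt 3 * c" by simp
qed

lemma tendsto_omega_arc:
  assumes init: "SA 0 * SC 0 \<noteq> 0"
  shows "\<exists>p\<in>omega_arc. ((\<lambda>t. (Sp t, SA t, SB t, SC t)) \<longlongrightarrow> p) at_top"
proof -
  obtain a c where a: "(Sp \<longlongrightarrow> a) at_top" and c: "(SB \<longlongrightarrow> c) at_top"
    using Sp_converges SB_converges by blast
  have "(a, 0, c, 0) \<in> omega_arc"
    using omega_arc_memberI limit_on_circle[OF a c] limit_signs[OF init a c] by blast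
  moreover have "((\<lambda>t. (Sp t, SA t, SB t, SC t)) \<longlongrightarrow> (a, 0, c, 0)) at_top"
    by (intro tendsto_Pair a c SA_tendsto_zero SC_tendsto_zero)
  ultimately show ?thesis by blast
qed

lemma tendsto_alpha_arc:
  assumes init: "SA 0 * SC 0 \<noteq> 0"
  shows "\<exists>p\<in>alpha_arc. ((\<lambda>t. (Sp t, SA t, SB t, SC t)) \<longlongrightarrow> p) at_bot"
proof -
  interpret reversed: kasner_orbit "\<lambda>t. - Sp (- t)" "\<lambda>t. SA (- t)" "\<lambda>t. - SB (- t)" "\<lambda>t. SC (- t)"
    using kasner_solution_time_reversal[OF solution] initially_on_sphere by unfold_locales simp_all
  obtain p where p: "p \<in> omega_arc"
    and lim: "((\<lambda>t. (- Sp (- t), SA (- t), - SB (- t), SC (- t))) \<longlongrightarrow> p) at_top"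
    using reversed.tendsto_omega_arc init by auto
  have "((\<lambda>t. (Sp (- t), SA (- t), SB (- t), SC (- t))) \<longlongrightarrow> kasner_reflection p) at_top"
    using kasner_reflection_tendsto[OF lim] by (simp add: kasner_reflection_def)
  then show ?thesis
    using kasner_reflection_omega_arc[OF p] by (auto simp: filterlim_at_bot_mirror)
qed

end

theorem mainTheorem5:
  fixes Sp SA SB SC :: "real \<Rightarrow> real"
  assumes sol: "kasner_solution Sp SA SB SC"
    and sphere: "(Sp 0)\<^sup>2 + (SA 0)\<^sup>2 + (SB 0)\<^sup>2 + (SC 0)\<^sup>2 = 1"
    and init: "SA 0 * SC 0 \<noteq> 0"
  shows "alpha_limit (\<lambda>t. (Sp t, SA t, SB t, SC t)) \<subseteq> alpha_arc
       \<and> omega_limit (\<lambda>t. (Sp t, SA t, SB t, SC t)) \<subseteq> omega_arc"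
proof -
  interpret kasner_orbit Sp SA SB SC using sol sphere by unfold_locales
  obtain p where "p \<in> omega_arc" "((\<lambda>t. (Sp t, SA t, SB t, SC t)) \<longlongrightarrow> p) at_top"
    using tendsto_omega_arc[OF init] by blast
  moreover obtain q where "q \<in> alpha_arc" "((\<lambda>t. (Sp t, SA t, SB t, SC t)) \<longlongrightarrow> q) at_bot"
    using tendsto_alpha_arc[OF init] by blast
  ultimately show ?thesis using omega_limit_tendsto alpha_limit_tendsto by blast
qed

end
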